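(* For any admissible pair $(r,a)$ and every $i=0,\dots,r-1$, the divisor $X_i-E_1$ on the Danilov resolution of $\frac1r(1,a,r-a)$ is effective.
   Context: Notation: for integers $s$ and $t>0$, $\langle s\rangle_t$ is the least non-negative integer congruent to $s$ modulo $t$. A pair of integers $(r,a)$ is admissible if $r\ge1$, $0\le a<r$, $\gcd(r,a)=1$ (so $a=0$ only for $r=1$). For admissible $(r,a)$ put $N(r,a)=\mathbb Z^3+\mathbb Z\cdot\frac1r(1,a,r-a)\subset\mathbb Q^3$; $e_1,e_2,e_3$ is the standard basis and $\Delta(r,a)$ the cone spanned by $e_1,e_2,e_3$. Let $b$ be an inverse of $a$ modulo $r$ and $p_i=\frac1r(\langle -ib\rangle_r,r-i,i)$, $i=0,\dots,r$ (so $p_0=e_2$, $p_r=e_3$, $p_{r-a}=\frac1r(1,a,r-a)$). For $r>1$ let $(r_L,a_L)=(r-a,\langle r\rangle_{r-a})$, $(r_R,a_R)=(a,\langle -r\rangle_a)$; there are lattice isomorphisms $L:N(r_L,a_L)\to N(r,a)$, $R:N(r_R,a_R)\to N(r,a)$ with $L(e_1)=e_1$, $L(e_2)=e_2$, $L(e_3)=p_{r-a}$, $R(e_1)=e_1$, $R(e_2)=p_{r-a}$, $R(e_3)=e_3$. The Danilov fan $\Sigma(r,a)$ is defined recursively: $\Sigma(1,0)$ is $\Delta(1,0)$ with its faces; for $r>1$, $\Sigma(r,a)$ consists of the cone spanned by $e_2,e_3,p_{r-a}$ with its faces, together with $L(\Sigma(r_L,a_L))$ and $R(\Sigma(r_R,a_R))$.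 The Danilov resolution $Y$ of $\frac1r(1,a,r-a)$ is the smooth toric variety of $\Sigma(r,a)$, with torus $T$; its rays are spanned by $e_1,p_0,\dots,p_r$; $D_i$ is the $T$-invariant prime divisor of the ray through $p_i$ and $E_j$ that of $e_j$. The permutation $\tau(r,a,\cdot)$ of $\{0,\dots,r-1\}$: if $a\in\{1,r-1\}$, $\tau(r,a,i)=\langle ai-1\rangle_r$; otherwise $\tau(r,a,i)=\tau(r-a,\langle r\rangle_{r-a},\langle i\rangle_{r-a})$ for $i\ge a$ and $\tau(r,a,i)=(r-a)+\tau(a,\langle -r\rangle_a,i)$ for $i<a$. With indices mod $r$, on $Y$ define $Y_{i-a}=\sum_{k=0}^{\tau(r,a,i)}D_k$, $Z_i=\sum_{k=\tau(r,a,i)+1}^{r}D_k$ ($i=0,\dots,r-1$), and $X_0,\dots,X_{r-1}$ the unique divisors with $X_0=E_1$ and $X_i+Z_{i+1}=Z_i+X_{i-a}$ for all $i$. *)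

theory Defs
  imports Main
begin

definition admissible :: "nat \<Rightarrow> nat \<Rightarrow> bool" where
  "admissible r a \<longleftrightarrow> 1 \<le> r \<and> a < r \<and> gcd r a = 1"

text \<open>For admissible (r,a) the first branch is exactly the case a in {1, r-1}
  (for r = 1 the only admissible a is 0 = r-1); the extra guards only make the
  function total on non-admissible arguments.\<close>
function tau :: "nat \<Rightarrow> nat \<Rightarrow> nat \<Rightarrow> nat" where
  "tau r a i =
     (if a = 1 \<or> a + 1 = r \<or> a = 0 \<or> r \<le> a
      then nat ((int a * int i - 1) mod int r)
      else if a \<le> i then tau (r - a) (r mod (r - a)) (i mod (r - a))
      else (r - a) + tau a (nat ((- int r) mod int a)) i)"
  by pat_completeness auto
termination by (relation "measure (\<lambda>(r, a, i). r)") auto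

text \<open>T-invariant prime divisors of the Danilov resolution Y: the rays of the
  Danilov fan are spanned by e_1, p_0, ..., p_r; E1 is the divisor of e_1 and
  D k the divisor of p_k (0 \<le> k \<le> r).  A T-invariant Weil divisor is a
  finite integer combination of them, represented by its coefficient function.\<close>
datatype prim = E1 | D nat

type_synonym divisor = "prim \<Rightarrow> int"

definition E1div :: divisor where
  "E1div = (\<lambda>p. if p = E1 then 1 else 0)"

definition Ddiv :: "nat \<Rightarrow> divisor" where
  "Ddiv k = (\<lambda>p. if p = D k then 1 else 0)"

definition effective :: "divisor \<Rightarrow> bool" where
  "effective Dv \<longleftrightarrow> (\<forall>p. 0 \<le> Dv p)"

definition Zdiv :: "nat \<Rightarrow> nat \<Rightarrow> int \<Rightarrow> divisor" where
  "Zdiv r a i = (\<lambda>p. \<Sum>k\<in>{tau r a (nat (i mod int r)) + 1 .. r}. Ddiv k p)"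

text \<open>Indices are integers
  and the family is required to be r-periodic (this is "indices mod r").\<close>
definition Xdiv :: "nat \<Rightarrow> nat \<Rightarrow> int \<Rightarrow> divisor" where
  "Xdiv r a = (THE X :: int \<Rightarrow> divisor.
      X 0 = E1div \<and>
      (\<forall>i. X i = X (i mod int r)) \<and>
      (\<forall>i p. X i p + Zdiv r a (i + 1) p = Zdiv r a i p + X (i - int a) p))"

end

theory Submission
  imports Defs "HOL-Number_Theory.Cong"
begin

text \<open>
  Write \<open>b\<close> for the inverse of \<open>a\<close> modulo \<open>r\<close> and index the residues as \<open>j a mod r\<close>,
  \<open>j = 1..r\<close>.  Unwinding the recurrence gives \<open>X (m a) - E_1\<close> as the sum over \<open>j \<le> m\<close>
  of \<open>Z (j a) - Z (j a + 1)\<close>, and each such step is plus or minus the sum of the \<open>D_k\<close>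
  with \<open>k\<close> between \<open>\<tau> (j a)\<close> and \<open>\<tau> (j a + 1)\<close>.  The combinatorial heart, proved along
  the recursion defining \<open>\<tau>\<close>, is that \<open>\<tau>\<close> increases from \<open>y\<close> to \<open>y + 1\<close> exactly when
  the index of \<open>y + 1\<close> exceeds that of \<open>y\<close>, i.e. when \<open>j + b \<le> r\<close>.  So the steps are
  first effective and then anti-effective, and they cancel over a full period; hence every
  partial sum is effective.
\<close>

declare tau.simps [simp del]

abbreviation tau_base_case :: "nat \<Rightarrow> nat \<Rightarrow> bool" where
  "tau_base_case r a \<equiv> a = 1 \<or> a + 1 = r \<or> a = 0 \<or> r \<le> a"

abbreviation aL :: "nat \<Rightarrow> nat \<Rightarrow> nat" where
  "aL r a \<equiv> r mod (r - a)"

abbreviation aR :: "nat \<Rightarrow> nat \<Rightarrow> nat" where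
  "aR r a \<equiv> nat ((- int r) mod int a)"

section \<open>The recursion for \<open>\<tau>\<close>\<close>

lemma admissible_left:
  assumes "admissible r a" "\<not> tau_base_case r a"
  shows "admissible (r - a) (aL r a)"
proof -
  have "gcd (r - a) (aL r a) = gcd r (r - a)" by (simp only: gcd_red_nat[of r "r - a"])
  also have "\<dots> = gcd a r"
    using assms(2) by (metis gcd.commute gcd_diff2_nat le_cases)
  also have "\<dots> = 1" using assms(1) unfolding admissible_def by (simp add: gcd.commute)
  finally show ?thesis using assms(2) unfolding admissible_def by auto
qed

lemma admissible_right:
  assumes "admissible r a" "\<not> tau_base_case r a"
  shows "admissible a (aR r a)"
proof -
  have a0: "a > 0" using assms(2) by auto
  have nn: "0 \<le> (- int r) mod int a" using a0 by simp
  have "gcd (int a) ((- int r) mod int a) = gcd (int a) (int r)"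
    by (metis gcd.commute gcd_neg2_int gcd_red_int)
  also have "\<dots> = 1" using assms(1) unfolding admissible_def by (simp add: gcd.commute)
  finally have "gcd (int a) (int (aR r a)) = 1" using nn by simp
  then have "gcd a (aR r a) = 1" by (metis gcd_int_int_eq of_nat_eq_1_iff)
  moreover have "aR r a < a" using a0 nn by (simp add: nat_less_iff)
  ultimately show ?thesis using a0 unfolding admissible_def by auto
qed

lemma tau_upper:
  "\<not> tau_base_case r a \<Longrightarrow> a \<le> y \<Longrightarrow> tau r a y = tau (r - a) (aL r a) (y mod (r - a))"
  by (subst tau.simps) simp

lemma tau_lower:
  "\<not> tau_base_case r a \<Longrightarrow> y < a \<Longrightarrow> tau r a y = (r - a) + tau a (aR r a) y"
  by (subst tau.simps) simp

lemma tau_less: "admissible r a \<Longrightarrow> tau r a i < r"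
proof (induction r a i rule: tau.induct)
  case (1 r a i)
  show ?case
  proof (cases "tau_base_case r a")
    case True
    have "r \<ge> 1" using "1.prems" unfolding admissible_def by auto
    then show ?thesis using True by (subst tau.simps) (simp add: nat_less_iff)
  next
    case False
    note L = admissible_left[OF "1.prems" False] and R = admissible_right[OF "1.prems" False]
    show ?thesis
    proof (cases "a \<le> i")
      case True
      then show ?thesis
        using "1.IH"(1)[OF False True L] tau_upper[OF False True] by linarith
    next
      case le: False
      then show ?thesis
        using "1.IH"(2)[OF False le R] tau_lower[OF False, of i] False by linarith
    qed
  qed
qed

section \<open>Residues indexed by multiples of \<open>a\<close>\<close>

lemma mult_mod_inj:
  fixes a r j j' :: nat
  assumes "coprime a r" "j \<in> {1..r}" "j' \<in> {1..r}" "(j*a) mod r = (j'*a) mod r"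
  shows "j = j'"
proof -
  have "[j = j'] (mod r)"
    using assms(1,4) unfolding cong_def[symmetric] by (simp add: cong_mult_rcancel_nat)
  then have m: "j mod r = j' mod r" unfolding cong_def .
  show ?thesis
  proof (cases "j = r \<or> j' = r")
    case True
    then show ?thesis using m assms(2,3)
      by (metis atLeastAtMost_iff le_neq_implies_less mod_less mod_self not_one_le_zero)
  next
    case False
    then show ?thesis using m assms(2,3) by simp
  qed
qed

lemma bij_betw_mult_add_mod:
  fixes a r c :: nat
  assumes "coprime a r" "0 < r"
  shows "bij_betw (\<lambda>j. (j*a + c) mod r) {1..r} {0..<r}"
proof -
  have inj: "inj_on (\<lambda>j. (j*a + c) mod r) {1..r}"
  proof (rule inj_onI)
    fix x y assume "x \<in> {1..r}" "y \<in> {1..r}" "(x*a + c) mod r = (y*a + c) mod r"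
    then show "x = y"
      using mult_mod_inj[OF assms(1)] by (metis cong_add_rcancel_nat cong_def)
  qed
  have "(\<lambda>j. (j*a + c) mod r) ` {1..r} = {0..<r}"
    using assms(2) card_image[OF inj] by (intro card_subset_eq) auto
  then show ?thesis using inj unfolding bij_betw_def by simp
qed

lemma sum_mult_add_mod:
  fixes a r c :: nat and g :: "nat \<Rightarrow> int"
  assumes "coprime a r" "0 < r"
  shows "(\<Sum>j\<in>{1..r}. g ((j*a + c) mod r)) = (\<Sum>x<r. g x)"
  using sum.reindex_bij_betw[OF bij_betw_mult_add_mod[OF assms, of c], of g]
  by (simp add: atLeast0LessThan)

lemma mod_inverse_exists:
  assumes "admissible r a" "2 \<le> r"
  obtains b where "1 \<le> b" "b < r" "(b*a) mod r = 1"
proof -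
  have "coprime a r" "0 < r" using assms(1) unfolding admissible_def
    by (auto simp: coprime_iff_gcd_eq_1 gcd.commute)
  then have "1 \<in> (\<lambda>j. (j*a + 0) mod r) ` {1..r}"
    using bij_betw_mult_add_mod[of a r 0] assms(2) unfolding bij_betw_def by simp
  then obtain b where "b \<in> {1..r}" "(b*a) mod r = 1" by auto
  moreover then have "b \<noteq> r" by auto
  ultimately show ?thesis using that by auto
qed

section \<open>Consecutive residues under \<open>\<tau>\<close>\<close>

definition tau_step_order :: "nat \<Rightarrow> nat \<Rightarrow> bool" where
  "tau_step_order r a \<longleftrightarrow>
     (\<forall>j1\<in>{1..r}. \<forall>j2\<in>{1..r}. (j2*a) mod r = (j1*a + 1) mod r \<longrightarrow>
        (tau r a ((j1*a) mod r) < tau r a ((j2*a) mod r) \<longleftrightarrow> j1 < j2))"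

lemma tau_base_mult_mod:
  assumes "admissible r a" "tau_base_case r a" "j \<in> {1..r}"
  shows "tau r a ((j*a) mod r) = j - 1"
proof -
  have r1: "1 \<le> r" and ar: "a < r" and g: "gcd r a = 1"
    using assms(1) unfolding admissible_def by auto
  have aa: "[int a * int a = 1] (mod int r)"
  proof -
    consider "a = 1" | "1 \<le> a" "a + 1 = r" | "a = 0" using assms(2) ar by linarith
    then show ?thesis
    proof cases
      case 2
      then have "int r = int a + 1" by simp
      then have "int a * int a = 1 + (int a - 1) * int r" by (simp add: algebra_simps)
      then show ?thesis by (simp add: cong_def)
    qed (use g in auto)
  qed
  have "[int ((j*a) mod r) = int j * int a] (mod int r)" by (simp add: cong_def zmod_int)
  then have "[int a * int ((j*a) mod r) - 1 = int a * (int j * int a) - 1] (mod int r)"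
    by (intro cong_diff cong_mult cong_refl)
  also have "int a * (int j * int a) - 1 = int j * (int a * int a) - 1" by simp
  also have "[\<dots> = int j * 1 - 1] (mod int r)"
    by (intro cong_diff cong_mult cong_refl aa)
  finally have "(int a * int ((j*a) mod r) - 1) mod int r = int j - 1"
    using assms(3) by (simp add: cong_def)
  then show ?thesis using assms(2) by (subst tau.simps) simp
qed

lemma tau_step_order_base:
  assumes "admissible r a" "tau_base_case r a"
  shows "tau_step_order r a"
  unfolding tau_step_order_def
proof (intro ballI impI)
  fix j1 j2 assume "j1 \<in> {1..r}" "j2 \<in> {1..r}"
  then show "tau r a ((j1*a) mod r) < tau r a ((j2*a) mod r) \<longleftrightarrow> j1 < j2"
    using tau_base_mult_mod[OF assms] by auto
qed

text \<open>
  The maps \<open>j \<mapsto> \<lfloor>j a / r\<rfloor>\<close> and \<open>j \<mapsto> j - \<lfloor>j a / r\<rfloor>\<close> carry the indexing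
  \<open>j \<mapsto> j a mod r\<close> of \<open>{0..<r}\<close> to the corresponding indexings for the pairs \<open>(a, a\<^sub>R)\<close> and
  \<open>(r - a, a\<^sub>L)\<close>, on the residues below \<open>a\<close> and modulo \<open>r - a\<close> respectively.
\<close>

lemma lower_index_mod:
  fixes a r j :: nat
  assumes "0 < a"
  shows "((j*a div r) * aR r a) mod a = ((j*a) mod r) mod a"
proof -
  define q where "q = j*a div r"
  define y where "y = (j*a) mod r"
  have d: "int j * int a = int q * int r + int y"
    unfolding q_def y_def by (metis div_mult_mod_eq of_nat_add of_nat_mult mult.commute)
  have "int ((q * aR r a) mod a) = (int q * ((- int r) mod int a)) mod int a"
    using assms by (simp add: zmod_int)
  also have "\<dots> = (int q * (- int r)) mod int a" by (simp add: mod_mult_right_eq)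
  also have "\<dots> = (int q * (- int r) + int j * int a) mod int a"
    by (rule mod_mult_self1[symmetric])
  also have "int q * (- int r) + int j * int a = int y" using d by simp
  also have "int y mod int a = int (y mod a)" by (simp add: zmod_int)
  finally show ?thesis unfolding q_def y_def by simp
qed

lemma upper_index_mod:
  fixes a r j :: nat
  assumes "a < r"
  shows "((j - j*a div r) * aL r a) mod (r - a) = ((j*a) mod r) mod (r - a)"
proof -
  define q where "q = j*a div r"
  define y where "y = (j*a) mod r"
  have d: "int j * int a = int q * int r + int y"
    unfolding q_def y_def by (metis div_mult_mod_eq of_nat_add of_nat_mult mult.commute)
  have qj: "q \<le> j"
    unfolding q_def using assms by (metis div_le_mono mult_le_mono2 less_imp_le nonzero_mult_div_cancel_right not_less0 gr_implies_not0)
  have rr: "int (r - a) = int r - int a" using assms by simp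
  have "int (((j - q) * aL r a) mod (r - a)) = ((int j - int q) * int r) mod int (r - a)"
    using qj by (simp add: zmod_int of_nat_diff mod_mult_right_eq)
  also have "\<dots> = ((int j - int q) * int r - int j * int (r - a)) mod int (r - a)"
    by (simp add: mod_diff_right_eq[symmetric])
  also have "(int j - int q) * int r - int j * int (r - a) = int y"
    using d rr by (simp add: algebra_simps)
  also have "int y mod int (r - a) = int (y mod (r - a))" by (simp add: zmod_int)
  finally show ?thesis unfolding q_def y_def by simp
qed

lemma one_le_mult_div:
  fixes a r j :: nat
  assumes "(j*a) mod r < a" "1 \<le> j"
  shows "1 \<le> j*a div r"
proof (rule ccontr)
  assume "\<not> 1 \<le> j*a div r"
  then have "(j*a) mod r = j*a" by (metis div_mult_mod_eq add_0 mult_0 less_one not_le)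
  then show False using assms by (metis le_less_trans mult_le_mono1 mult_1 not_less)
qed

lemma mult_div_le:
  fixes a r j :: nat
  assumes "j \<le> r" "0 < r"
  shows "j*a div r \<le> a"
  using div_le_mono[OF mult_le_mono1[OF assms(1)], of a r] assms(2) by simp

lemma mult_div_less:
  fixes a r j :: nat
  assumes "a < r" "1 \<le> j"
  shows "j*a div r < j"
  using assms by (simp add: div_less_iff_less_mult mult.commute)

lemma le_mult_div_add:
  fixes a r j :: nat
  assumes "a < r" "j \<le> r"
  shows "j + a \<le> j*a div r + r"
proof -
  define q where "q = j*a div r"
  have d: "int j * int a = int q * int r + int ((j*a) mod r)"
    unfolding q_def by (metis div_mult_mod_eq of_nat_add of_nat_mult mult.commute)
  have "int r * (int j + int a - int r) \<le> int j * int a"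
    using mult_nonneg_nonneg[of "int r - int j" "int r - int a"] assms
    by (simp add: algebra_simps)
  also have "\<dots> < int r * (int q + 1)" using d assms by (simp add: algebra_simps)
  finally have "int j + int a - int r < int q + 1"
    using assms by (simp add: mult_less_cancel_left)
  then show ?thesis unfolding q_def by simp
qed

lemma mult_div_diff_le:
  fixes a r j1 j2 :: nat
  assumes "a \<le> r" "0 < r" "j1 \<le> j2"
  shows "j2*a div r \<le> j1*a div r + (j2 - j1)"
proof -
  have "j2*a = j1*a + (j2 - j1)*a" using assms by (simp add: algebra_simps)
  also have "\<dots> \<le> j1*a + (j2 - j1)*r" using assms by simp
  finally have "j2*a div r \<le> (j1*a + (j2 - j1)*r) div r" by (rule div_le_mono)
  also have "\<dots> = j1*a div r + (j2 - j1)" using assms by simp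
  finally show ?thesis .
qed

lemma tau_step_order_lower:
  assumes nb: "\<not> tau_base_case r a" and IH: "tau_step_order a (aR r a)"
    and j: "j1 \<in> {1..r}" "j2 \<in> {1..r}"
    and small: "(j1*a) mod r + 1 < a" and succ: "(j2*a) mod r = (j1*a) mod r + 1"
  shows "tau r a ((j1*a) mod r) < tau r a ((j2*a) mod r) \<longleftrightarrow> j1 < j2"
proof -
  define q1 where "q1 = j1*a div r"
  define q2 where "q2 = j2*a div r"
  have a0: "0 < a" and r0: "0 < r" using nb by auto
  have rep1: "(q1 * aR r a) mod a = (j1*a) mod r"
    using lower_index_mod[OF a0, of j1 r] small unfolding q1_def by simp
  have rep2: "(q2 * aR r a) mod a = (j2*a) mod r"
    using lower_index_mod[OF a0, of j2 r] small succ unfolding q2_def by simp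
  have q1: "q1 \<in> {1..a}"
    using one_le_mult_div[of j1 a r] mult_div_le[of j1 r a] small j r0 unfolding q1_def by auto
  have q2: "q2 \<in> {1..a}"
    using one_le_mult_div[of j2 a r] mult_div_le[of j2 r a] small succ j r0
    unfolding q2_def by auto
  have "(q1 * aR r a + 1) mod a = ((q1 * aR r a) mod a + 1) mod a" by (simp add: mod_Suc_eq)
  then have "(q2 * aR r a) mod a = (q1 * aR r a + 1) mod a"
    using rep1 rep2 succ small by simp
  then have "tau a (aR r a) ((q1 * aR r a) mod a) < tau a (aR r a) ((q2 * aR r a) mod a)
      \<longleftrightarrow> q1 < q2"
    using IH q1 q2 unfolding tau_step_order_def by blast
  then have "tau a (aR r a) ((j1*a) mod r) < tau a (aR r a) ((j2*a) mod r) \<longleftrightarrow> q1 < q2"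
    by (simp only: rep1 rep2)
  moreover have "q1 < q2 \<longleftrightarrow> j1 < j2"
  proof -
    have mono: "j \<le> j' \<Longrightarrow> j*a div r \<le> j'*a div r" for j j' by (simp add: div_le_mono)
    have "q1 \<noteq> q2" using rep1 rep2 succ by auto
    then show ?thesis using mono[of j1 j2] mono[of j2 j1] unfolding q1_def q2_def by linarith
  qed
  ultimately show ?thesis using small succ by (simp add: tau_lower[OF nb])
qed

lemma tau_step_order_upper:
  assumes nb: "\<not> tau_base_case r a" and IH: "tau_step_order (r - a) (aL r a)"
    and j: "j1 \<in> {1..r}" "j2 \<in> {1..r}"
    and large: "a \<le> (j1*a) mod r" and succ: "(j2*a) mod r = (j1*a) mod r + 1"
  shows "tau r a ((j1*a) mod r) < tau r a ((j2*a) mod r) \<longleftrightarrow> j1 < j2"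
proof -
  define p1 where "p1 = j1 - j1*a div r"
  define p2 where "p2 = j2 - j2*a div r"
  have ar: "a < r" using nb by simp
  have rep1: "(p1 * aL r a) mod (r - a) = (j1*a) mod r mod (r - a)"
    using upper_index_mod[OF ar, of j1] unfolding p1_def .
  have rep2: "(p2 * aL r a) mod (r - a) = (j2*a) mod r mod (r - a)"
    using upper_index_mod[OF ar, of j2] unfolding p2_def .
  have p1: "p1 \<in> {1..r - a}"
    using mult_div_less[OF ar, of j1] le_mult_div_add[OF ar, of j1] j unfolding p1_def by auto
  have p2: "p2 \<in> {1..r - a}"
    using mult_div_less[OF ar, of j2] le_mult_div_add[OF ar, of j2] j unfolding p2_def by auto
  have "(p1 * aL r a + 1) mod (r - a) = ((p1 * aL r a) mod (r - a) + 1) mod (r - a)"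
    by (simp add: mod_Suc_eq)
  then have "(p2 * aL r a) mod (r - a) = (p1 * aL r a + 1) mod (r - a)"
    using rep1 rep2 succ by (simp add: mod_Suc_eq)
  then have "tau (r - a) (aL r a) ((p1 * aL r a) mod (r - a))
        < tau (r - a) (aL r a) ((p2 * aL r a) mod (r - a)) \<longleftrightarrow> p1 < p2"
    using IH p1 p2 unfolding tau_step_order_def by blast
  then have "tau (r - a) (aL r a) ((j1*a) mod r mod (r - a))
        < tau (r - a) (aL r a) ((j2*a) mod r mod (r - a)) \<longleftrightarrow> p1 < p2"
    by (simp only: rep1 rep2)
  moreover have "p1 < p2 \<longleftrightarrow> j1 < j2"
  proof -
    have mono: "j \<le> j' \<Longrightarrow> j' \<in> {1..r} \<Longrightarrow> j - j*a div r \<le> j' - j'*a div r" for j j'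
      using mult_div_diff_le[of a r j j'] mult_div_less[OF ar, of j'] ar by auto
    have "2 \<le> r - a" using nb by auto
    then have "p1 \<noteq> p2" using rep1 rep2 succ by (auto simp: mod_Suc split: if_splits)
    then show ?thesis using mono[of j1 j2] mono[of j2 j1] j unfolding p1_def p2_def by linarith
  qed
  ultimately show ?thesis using large succ by (simp add: tau_upper[OF nb])
qed

lemma tau_step_order_step:
  assumes adm: "admissible r a" and nb: "\<not> tau_base_case r a"
    and IH_left: "tau_step_order (r - a) (aL r a)" and IH_right: "tau_step_order a (aR r a)"
  shows "tau_step_order r a"
  unfolding tau_step_order_def
proof (intro ballI impI)
  fix j1 j2 assume j: "j1 \<in> {1..r}" "j2 \<in> {1..r}" and c: "(j2*a) mod r = (j1*a + 1) mod r"
  have cop: "coprime a r" using adm unfolding admissible_def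
    by (simp add: coprime_iff_gcd_eq_1 gcd.commute)
  define y1 where "y1 = (j1*a) mod r"
  define y2 where "y2 = (j2*a) mod r"
  have y1r: "y1 < r" and y2e: "y2 = (y1 + 1) mod r"
    using nb unfolding y1_def y2_def c by (auto simp: mod_Suc_eq)
  have index: "j = j'" if "j \<in> {1..r}" "(j*a) mod r = (j'*a) mod r" "j' \<in> {1..r}" for j j'
    using mult_mod_inj[OF cop] that by blast
  consider "y1 = r - 1" | "y1 \<noteq> r - 1" "y1 = a - 1" | "y1 + 1 < a" | "a \<le> y1" "y1 + 1 < r"
    using y1r by linarith
  then show "tau r a y1 < tau r a y2 \<longleftrightarrow> j1 < j2"
  proof cases
    case 1
    then have "y2 = 0" and "a \<le> y1" using y2e y1r nb by auto
    then have "j2 = r" using index[of r j2] j unfolding y2_def by auto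
    moreover have "j1 \<noteq> r" using 1 nb unfolding y1_def by auto
    moreover have "tau r a y1 < r - a"
      using tau_upper[OF nb \<open>a \<le> y1\<close>] tau_less[OF admissible_left[OF adm nb]] by simp
    moreover have "r - a \<le> tau r a y2" using tau_lower[OF nb] \<open>y2 = 0\<close> nb by simp
    ultimately show ?thesis using j by simp
  next
    case 2
    then have "y2 = a" using y2e nb by auto
    then have "j2 = 1" using index[of 1 j2] j nb unfolding y2_def by auto
    moreover have "tau r a y2 < r - a"
      using tau_upper[OF nb] tau_less[OF admissible_left[OF adm nb]] \<open>y2 = a\<close> by simp
    moreover have "r - a \<le> tau r a y1" using tau_lower[OF nb] 2 nb by simp
    ultimately show ?thesis using j by simp
  next
    case 3
    then have "y2 = y1 + 1" using y2e nb by simp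
    then show ?thesis using tau_step_order_lower[OF nb IH_right j] 3 unfolding y1_def y2_def by simp
  next
    case 4
    then have "y2 = y1 + 1" using y2e by simp
    then show ?thesis using tau_step_order_upper[OF nb IH_left j] 4 unfolding y1_def y2_def by simp
  qed
qed

lemma tau_step_order: "admissible r a \<Longrightarrow> tau_step_order r a"
proof (induction r arbitrary: a rule: less_induct)
  case (less r)
  show ?case
  proof (cases "tau_base_case r a")
    case True
    then show ?thesis using tau_step_order_base[OF less.prems] by blast
  next
    case False
    then have "r - a < r" "a < r" by auto
    with False show ?thesis
      using tau_step_order_step[OF less.prems False] less.IH
        admissible_left[OF less.prems False] admissible_right[OF less.prems False]
      by blast
  qed
qed

section \<open>The divisors \<open>X\<^sub>i\<close>\<close>

definition Zstep :: "nat \<Rightarrow> nat \<Rightarrow> nat \<Rightarrow> divisor" where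
  "Zstep r a j = (\<lambda>p. Zdiv r a (int (j*a)) p - Zdiv r a (int (j*a) + 1) p)"

definition Zstep_sum :: "nat \<Rightarrow> nat \<Rightarrow> nat \<Rightarrow> divisor" where
  "Zstep_sum r a m = (\<lambda>p. \<Sum>j\<in>{1..m}. Zstep r a j p)"

lemma Zstep_sum_0 [simp]: "Zstep_sum r a 0 p = 0"
  unfolding Zstep_sum_def by simp

lemma Zstep_sum_Suc: "Zstep_sum r a (Suc m) p = Zstep_sum r a m p + Zstep r a (Suc m) p"
  unfolding Zstep_sum_def by (simp add: sum.cl_ivl_Suc)

lemma Zdiv_cong: "i mod int r = j mod int r \<Longrightarrow> Zdiv r a i = Zdiv r a j"
  unfolding Zdiv_def by simp

lemma Zdiv_of_nat_mod: "Zdiv r a (int x) = Zdiv r a (int (x mod r))"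
  by (rule Zdiv_cong) (simp add: zmod_int)

lemma Zstep_sum_period:
  assumes "coprime a r" "0 < r"
  shows "Zstep_sum r a r p = 0"
proof -
  have "(\<Sum>j\<in>{1..r}. Zdiv r a (int (j*a) + int c) p) = (\<Sum>x<r. Zdiv r a (int x) p)" for c
  proof -
    have "(\<Sum>j\<in>{1..r}. Zdiv r a (int (j*a) + int c) p)
        = (\<Sum>j\<in>{1..r}. Zdiv r a (int ((j*a + c) mod r)) p)"
      by (intro sum.cong refl) (metis Zdiv_of_nat_mod of_nat_add)
    also have "\<dots> = (\<Sum>x<r. Zdiv r a (int x) p)"
      by (rule sum_mult_add_mod[OF assms])
    finally show ?thesis .
  qed
  from this[of 0] this[of 1] show ?thesis
    unfolding Zstep_sum_def Zstep_def by (simp add: sum_subtractf)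
qed

lemma Zstep_sum_pred:
  assumes "coprime a r" "m < r"
  shows "Zstep_sum r a m p = Zstep_sum r a ((m + r - 1) mod r) p + Zstep r a m p"
proof (cases m)
  case 0
  have "int (r*a) mod int r = int (0*a) mod int r"
    and "(int (r*a) + 1) mod int r = (int (0*a) + 1) mod int r" by simp_all
  then have "Zstep r a 0 = Zstep r a r" unfolding Zstep_def by (metis Zdiv_cong)
  then have "Zstep_sum r a (r - 1) p + Zstep r a 0 p = Zstep_sum r a r p"
    using Zstep_sum_Suc[of r a "r - 1" p] assms(2) by simp
  also have "\<dots> = 0" using Zstep_sum_period[OF assms(1)] assms(2) by simp
  finally show ?thesis using 0 assms(2) by simp
next
  case (Suc m')
  then have "(Suc m' + r - 1) mod r = m'" using assms(2) by simp
  then show ?thesis unfolding Suc by (simp only: Zstep_sum_Suc)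
qed

lemma mod_inverse_index:
  assumes "(b*a) mod r = 1 mod r" "0 < r"
  shows "int (nat ((i * int b) mod int r) * a) mod int r = i mod int r"
proof -
  have ba: "[int b * int a = 1] (mod int r)"
    using assms(1) by (metis cong_def of_nat_1 of_nat_mult zmod_int)
  have "[int (nat ((i * int b) mod int r) * a) = (i * int b) mod int r * int a] (mod int r)"
    using assms(2) by simp
  also have "[(i * int b) mod int r * int a = i * (int b * int a)] (mod int r)"
    by (simp add: cong_def mod_mult_left_eq mult.assoc)
  also have "[i * (int b * int a) = i * 1] (mod int r)"
    by (intro cong_mult cong_refl ba)
  finally show ?thesis by (simp add: cong_def)
qed

lemma Zstep_sum_recurrence:
  assumes adm: "admissible r a" and binv: "(b*a) mod r = 1 mod r"
  defines "X \<equiv> \<lambda>i p. E1div p + Zstep_sum r a (nat ((i * int b) mod int r)) p"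
  shows "X i p + Zdiv r a (i + 1) p = Zdiv r a i p + X (i - int a) p"
proof -
  have r0: "0 < r" and cop: "coprime a r" using adm unfolding admissible_def
    by (auto simp: coprime_iff_gcd_eq_1 gcd.commute)
  define m where "m = nat ((i * int b) mod int r)"
  have mr: "m < r" and im: "int m = (i * int b) mod int r"
    unfolding m_def using r0 by (simp_all add: nat_less_iff)
  have ba: "(int b * int a) mod int r = 1 mod int r"
    using binv by (metis of_nat_1 of_nat_mult zmod_int)
  have shift: "int m - 1 + int r = int (m + r - 1)" using r0 by (simp add: of_nat_diff)
  have "((i - int a) * int b) mod int r = (int m - 1) mod int r"
    unfolding im using ba by (simp add: algebra_simps mod_diff_eq) (metis mod_diff_eq mod_mod_trivial)
  also have "\<dots> = (int m - 1 + int r) mod int r" by (rule mod_add_self2[symmetric])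
  also have "\<dots> = int ((m + r - 1) mod r)" unfolding shift by (simp only: zmod_int)
  finally have pred: "nat (((i - int a) * int b) mod int r) = (m + r - 1) mod r" by simp
  have mi: "int (m*a) mod int r = i mod int r"
    unfolding m_def by (rule mod_inverse_index[OF binv r0])
  moreover from mi have "(int (m*a) + 1) mod int r = (i + 1) mod int r"
    by (metis mod_add_left_eq)
  ultimately have "Zstep r a m p = Zdiv r a i p - Zdiv r a (i + 1) p"
    unfolding Zstep_def by (metis Zdiv_cong)
  then show ?thesis
    unfolding X_def m_def[symmetric] pred using Zstep_sum_pred[OF cop mr, of p] by simp
qed

lemma recurrence_solution_at_multiple:
  assumes rec: "\<forall>i p. X i p + Zdiv r a (i + 1) p = Zdiv r a i p + X (i - int a) p"
    and X0: "X 0 = E1div"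
  shows "X (int (m*a)) p = E1div p + Zstep_sum r a m p"
proof (induction m)
  case 0
  then show ?case using X0 by simp
next
  case (Suc m)
  have "int (Suc m * a) - int a = int (m*a)" by simp
  then have "X (int (Suc m * a)) p + Zdiv r a (int (Suc m * a) + 1) p
        = Zdiv r a (int (Suc m * a)) p + X (int (m*a)) p"
    using rec by metis
  then show ?case using Suc Zstep_sum_Suc[of r a m p] unfolding Zstep_def by simp
qed

lemma Xdiv_eq:
  assumes adm: "admissible r a" and binv: "(b*a) mod r = 1 mod r"
  shows "Xdiv r a = (\<lambda>i p. E1div p + Zstep_sum r a (nat ((i * int b) mod int r)) p)"
    (is "_ = ?X")
proof -
  have r0: "0 < r" using adm unfolding admissible_def by simp
  have unique: "X = ?X" if X0: "X 0 = E1div" and per: "\<forall>i. X i = X (i mod int r)"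
    and rec: "\<forall>i p. X i p + Zdiv r a (i + 1) p = Zdiv r a i p + X (i - int a) p" for X
  proof (intro ext)
    fix i p
    define m where "m = nat ((i * int b) mod int r)"
    have "int (m*a) mod int r = i mod int r"
      unfolding m_def by (rule mod_inverse_index[OF binv r0])
    then have "X i p = X (int (m*a)) p" using per by metis
    also have "\<dots> = E1div p + Zstep_sum r a m p"
      by (rule recurrence_solution_at_multiple[OF rec X0])
    finally show "X i p = ?X i p" unfolding m_def .
  qed
  have "?X 0 = E1div" by simp
  moreover have "\<forall>i. ?X i = ?X (i mod int r)" by (simp add: mod_mult_left_eq)
  moreover have "\<forall>i p. ?X i p + Zdiv r a (i + 1) p = Zdiv r a i p + ?X (i - int a) p"
    using Zstep_sum_recurrence[OF adm binv] by blast
  ultimately show ?thesis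
    unfolding Xdiv_def by (intro the_equality) (use unique in blast)+
qed

section \<open>Effectivity\<close>

lemma tau_succ_less_iff:
  assumes adm: "admissible r a" and b: "1 \<le> b" "b < r" "(b*a) mod r = 1" and j: "j \<in> {1..r}"
  shows "tau r a ((j*a) mod r) < tau r a ((j*a + 1) mod r) \<longleftrightarrow> j + b \<le> r"
proof -
  define j2 where "j2 = (if j + b \<le> r then j + b else j + b - r)"
  have j2: "j2 \<in> {1..r}" using b j unfolding j2_def by auto
  have "(j2*a) mod r = ((j + b)*a) mod r"
  proof (cases "j + b \<le> r")
    case False
    then have "j2 + r = j + b" unfolding j2_def by simp
    then have "(j + b)*a = j2*a + r*a" by (metis add_mult_distrib)
    then show ?thesis by simp
  qed (simp add: j2_def)
  also have "\<dots> = (j*a + (b*a) mod r) mod r" by (simp add: algebra_simps mod_add_right_eq)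
  also have "\<dots> = (j*a + 1) mod r" unfolding b(3) ..
  finally have j2a: "(j2*a) mod r = (j*a + 1) mod r" .
  then have "tau r a ((j*a) mod r) < tau r a ((j2*a) mod r) \<longleftrightarrow> j < j2"
    using tau_step_order[OF adm] j j2 unfolding tau_step_order_def by blast
  moreover have "j < j2 \<longleftrightarrow> j + b \<le> r" using b j unfolding j2_def by auto
  ultimately show ?thesis using j2a by simp
qed

lemma Zdiv_E1 [simp]: "Zdiv r a x E1 = 0"
  unfolding Zdiv_def Ddiv_def by simp

lemma Zdiv_D [simp]:
  "Zdiv r a x (D k) = (if tau r a (nat (x mod int r)) < k \<and> k \<le> r then 1 else 0)"
  unfolding Zdiv_def Ddiv_def by (simp add: sum.delta)

lemma Zstep_E1 [simp]: "Zstep r a j E1 = 0"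
  unfolding Zstep_def by simp

lemma Zstep_D:
  "Zstep r a j (D k) = (if tau r a ((j*a) mod r) < k \<and> k \<le> r then 1 else 0)
                     - (if tau r a ((j*a + 1) mod r) < k \<and> k \<le> r then 1 else 0)"
proof -
  have "nat (int x mod int r) = x mod r" for x
    unfolding zmod_int[symmetric] by (rule nat_int)
  from this[of "j*a"] this[of "j*a + 1"] show ?thesis
    unfolding Zstep_def Zdiv_D of_nat_add of_nat_1 by (simp only:)
qed

lemma Zstep_nonneg:
  assumes "admissible r a" "1 \<le> b" "b < r" "(b*a) mod r = 1" "j \<in> {1..r}" "j + b \<le> r"
  shows "0 \<le> Zstep r a j p"
  using tau_succ_less_iff[OF assms(1-5)] assms(6)
  by (cases p) (auto simp: Zstep_D)

lemma Zstep_nonpos: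
  assumes "admissible r a" "1 \<le> b" "b < r" "(b*a) mod r = 1" "j \<in> {1..r}" "r < j + b"
  shows "Zstep r a j p \<le> 0"
  using tau_succ_less_iff[OF assms(1-5)] assms(6)
  by (cases p) (auto simp: Zstep_D)

lemma Zstep_sum_nonneg:
  assumes adm: "admissible r a" and b: "1 \<le> b" "b < r" "(b*a) mod r = 1" and m: "m \<le> r"
  shows "0 \<le> Zstep_sum r a m p"
proof (cases "m + b \<le> r")
  case True
  then show ?thesis
    unfolding Zstep_sum_def using Zstep_nonneg[OF adm b] m by (intro sum_nonneg) auto
next
  case False
  have r0: "0 < r" and cop: "coprime a r" using adm unfolding admissible_def
    by (auto simp: coprime_iff_gcd_eq_1 gcd.commute)
  have "{1..r} = {1..m} \<union> {Suc m..r}" using m by auto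
  then have "Zstep_sum r a r p = Zstep_sum r a m p + (\<Sum>j\<in>{Suc m..r}. Zstep r a j p)"
    unfolding Zstep_sum_def by (simp add: sum.union_disjoint)
  moreover have "(\<Sum>j\<in>{Suc m..r}. Zstep r a j p) \<le> 0"
    using Zstep_nonpos[OF adm b] False by (intro sum_nonpos) auto
  ultimately show ?thesis using Zstep_sum_period[OF cop r0, of p] by linarith
qed

theorem mainTheorem5:
  fixes r a i :: nat
  assumes "admissible r a" and "i < r"
  shows "effective (\<lambda>p. Xdiv r a (int i) p - E1div p)"
proof (cases "r = 1")
  case True
  then have "Xdiv r a (int i) = E1div" using Xdiv_eq[OF assms(1), of 1] assms(2) by simp
  then show ?thesis unfolding effective_def by simp
next
  case False
  then have "2 \<le> r" using assms(1) unfolding admissible_def by auto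
  then obtain b where b: "1 \<le> b" "b < r" "(b*a) mod r = 1"
    using mod_inverse_exists[OF assms(1)] by blast
  then have "(b*a) mod r = 1 mod r" by simp
  moreover have "nat ((int i * int b) mod int r) \<le> r"
    using b by (simp add: nat_le_iff less_imp_le)
  ultimately show ?thesis
    unfolding effective_def using Xdiv_eq[OF assms(1)] Zstep_sum_nonneg[OF assms(1) b] by simp
qed

end
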